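(* Let $m>n$ be positive integers and let $G[V_1,V_2]$ be a balanced bipartite graph on $2(m+n-1)$ vertices (so $|V_1|=|V_2|=m+n-1$) with minimum degree $\delta(G)>\frac{3}{4}(m+n-1)$. Then for every red-blue coloring of the edges of $G$, either the red subgraph contains a connected $m$-matching or the blue subgraph contains a connected $n$-matching.
   Context: For a red-blue edge coloring of $G$, the red subgraph $G_R$ (resp. blue subgraph $G_B$) is the spanning subgraph of $G$ consisting of all red (resp. blue) edges. A connected $k$-matching in a graph $H$ is a matching with $k$ edges all of which lie in a single connected component of $H$. A red connected $k$-matching is a connected $k$-matching in $G_R$; similarly for blue. *)

theory Defs
  imports Main
begin

definition adj :: "'a set set \<Rightarrow> 'a \<Rightarrow> 'a \<Rightarrow> bool" where
  "adj F u v \<longleftrightarrow> {u, v} \<in> F"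

definition connected_in :: "'a set set \<Rightarrow> 'a \<Rightarrow> 'a \<Rightarrow> bool" where
  "connected_in F u v \<longleftrightarrow> (adj F)\<^sup>*\<^sup>* u v"

definition degree :: "'a set set \<Rightarrow> 'a \<Rightarrow> nat" where
  "degree F v = card {u. {u, v} \<in> F}"

definition matching :: "'a set set \<Rightarrow> 'a set set \<Rightarrow> bool" where
  "matching F M \<longleftrightarrow> M \<subseteq> F \<and> (\<forall>e\<in>M. \<forall>e'\<in>M. e \<noteq> e' \<longrightarrow> e \<inter> e' = {})"

definition connected_k_matching :: "'a set set \<Rightarrow> nat \<Rightarrow> 'a set set \<Rightarrow> bool" where
  "connected_k_matching F k M \<longleftrightarrow> matching F M \<and> finite M \<and> card M = k \<and>
     (\<exists>w. \<forall>e\<in>M. \<forall>x\<in>e. connected_in F w x)"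

definition has_connected_k_matching :: "'a set set \<Rightarrow> nat \<Rightarrow> bool" where
  "has_connected_k_matching F k \<longleftrightarrow> (\<exists>M. connected_k_matching F k M)"

definition bipartite_graph :: "'a set \<Rightarrow> 'a set \<Rightarrow> 'a set set \<Rightarrow> bool" where
  "bipartite_graph V1 V2 E \<longleftrightarrow> V1 \<inter> V2 = {} \<and>
     (\<forall>e\<in>E. \<exists>x\<in>V1. \<exists>y\<in>V2. e = {x, y})"

end

theory Submission
  imports Defs
begin

(* Suppose there is neither a red connected m-matching nor a blue connected n-matching, and let
   N = m + n - 1 and tau = (N - 1) div 4, so that every vertex has at most tau < N/4
   non-neighbours on the other side. By Koenig's theorem the edges of a monochromatic component
   without a connected k-matching are covered by fewer than k vertices, and by Hall's theorem
   two sets P, Q on opposite sides span a k-matching whenever k <= |P|, |Q| and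
   k + 2 tau <= |P| + |Q|; it is connected if all P-Q edges have one colour and one side is large
   or lies in one component. Hence no monochromatic component contains a whole side.
   Two vertices of X in different red and different blue components have N - 2 tau common
   neighbours, each in one of two red-blue cells; this yields a cell containing all but 3 tau
   vertices of Y, and likewise one on X. A cell with more than tau vertices on one side forces
   every vertex of the other side into its red or its blue component. Comparing the two heavy
   cells, either both sides lie in the union of one red and one blue component, which the two
   small covers cannot accommodate, or some component C of one colour has its complement on X and
   on Y inside two different components of the other colour. In this split configuration the
   matchings provided by Hall's theorem give contradictory linear inequalities. *)

section \<open>Hall's theorem and small vertex covers\<close>

lemma hall_condition_Diff_critical:
  fixes Nb :: "'a \<Rightarrow> 'b set"
  assumes finite_P: "finite P" and finite_Nb: "\<And>x. x \<in> P \<Longrightarrow> finite (Nb x)"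
    and hall: "\<And>S. S \<subseteq> P \<Longrightarrow> card S \<le> card (\<Union>(Nb ` S))"
    and "S \<subseteq> P" and critical: "card (\<Union>(Nb ` S)) = card S"
    and "T \<subseteq> P - S"
  shows "card T \<le> card (\<Union>x\<in>T. Nb x - \<Union>(Nb ` S))"
proof -
  have finite_S: "finite S" and finite_T: "finite T"
    using assms(4,6) finite_P by (auto intro: finite_subset)
  have finite_U: "finite (\<Union>(Nb ` (T \<union> S)))"
    using assms(4,6) finite_Nb finite_S finite_T by blast
  have "card T + card S = card (T \<union> S)"
    using assms(6) finite_S finite_T by (subst card_Un_disjoint) auto
  also have "\<dots> \<le> card (\<Union>(Nb ` (T \<union> S)))"
    using assms(4,6) by (intro hall) auto
  also have "\<dots> = card (\<Union>(Nb ` (T \<union> S)) - \<Union>(Nb ` S)) + card (\<Union>(Nb ` S))"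
    using finite_U card_mono[OF finite_U] by (subst card_Diff_subset) (auto intro: finite_subset)
  also have "\<Union>(Nb ` (T \<union> S)) - \<Union>(Nb ` S) = (\<Union>x\<in>T. Nb x - \<Union>(Nb ` S))"
    by blast
  finally show ?thesis
    using critical by simp
qed

lemma hall_condition_Diff_vertex:
  fixes Nb :: "'a \<Rightarrow> 'b set"
  assumes finite_P: "finite P" and finite_Nb: "\<And>x. x \<in> P \<Longrightarrow> finite (Nb x)"
    and surplus: "\<And>S. S \<noteq> {} \<Longrightarrow> S \<subset> P \<Longrightarrow> card S < card (\<Union>(Nb ` S))"
    and "x \<in> P" and "T \<subseteq> P - {x}"
  shows "card T \<le> card (\<Union>z\<in>T. Nb z - {y})"
proof (cases "T = {}")
  case False
  have "finite T"
    using assms(5) finite_P by (auto intro: finite_subset)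
  then have "finite (\<Union>(Nb ` T))"
    using assms(5) finite_Nb by blast
  moreover have "card T < card (\<Union>(Nb ` T))"
    using False assms(4,5) by (intro surplus) auto
  moreover have "(\<Union>z\<in>T. Nb z - {y}) = \<Union>(Nb ` T) - {y}"
    by blast
  ultimately show ?thesis
    by (auto simp: card_Diff_singleton_if)
qed simp

theorem hall_marriage:
  fixes Nb :: "'a \<Rightarrow> 'b set"
  assumes "finite P" and "\<And>x. x \<in> P \<Longrightarrow> finite (Nb x)"
    and "\<And>S. S \<subseteq> P \<Longrightarrow> card S \<le> card (\<Union>(Nb ` S))"
  shows "\<exists>f. inj_on f P \<and> (\<forall>x\<in>P. f x \<in> Nb x)"
  using assms
proof (induction "card P" arbitrary: P Nb rule: less_induct)
  case less
  note finite_P = less.prems(1) and finite_Nb = less.prems(2) and hall = less.prems(3)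
  show ?case
  proof (cases "\<exists>S. S \<noteq> {} \<and> S \<subset> P \<and> card (\<Union>(Nb ` S)) = card S")
    case True
    then obtain S where S: "S \<noteq> {}" "S \<subset> P" and critical: "card (\<Union>(Nb ` S)) = card S"
      by blast
    have "finite S"
      using S(2) finite_P by (auto intro: finite_subset)
    then have "card S < card P" and "0 < card S"
      using S finite_P by (auto simp: psubset_card_mono card_gt_0_iff)
    then have "card (P - S) < card P"
      using S(2) \<open>finite S\<close> by (simp add: card_Diff_subset)
    have "\<exists>f. inj_on f S \<and> (\<forall>x\<in>S. f x \<in> Nb x)"
      using S(2) finite_Nb hall by (intro less.hyps \<open>card S < card P\<close> \<open>finite S\<close>) auto
    then obtain f where f: "inj_on f S" "\<forall>x\<in>S. f x \<in> Nb x"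
      by blast
    have "\<exists>g. inj_on g (P - S) \<and> (\<forall>x\<in>P - S. g x \<in> Nb x - \<Union>(Nb ` S))"
      using hall_condition_Diff_critical[OF finite_P finite_Nb hall _ critical] S(2) finite_P finite_Nb
      by (intro less.hyps \<open>card (P - S) < card P\<close>) auto
    then obtain g where g: "inj_on g (P - S)" "\<forall>x\<in>P - S. g x \<in> Nb x - \<Union>(Nb ` S)"
      by blast
    have "f ` S \<inter> g ` (P - S) = {}"
      using f(2) g(2) by fastforce
    then have "inj_on (\<lambda>x. if x \<in> S then f x else g x) (S \<union> (P - S))"
      by (rule inj_on_disjoint_Un[OF f(1) g(1)])
    moreover have "S \<union> (P - S) = P"
      using S(2) by blast
    ultimately show ?thesis
      using S(2) f(2) g(2) by (intro exI[of _ "\<lambda>x. if x \<in> S then f x else g x"]) auto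
  next
    case False
    have surplus: "card S < card (\<Union>(Nb ` S))" if "S \<noteq> {}" "S \<subset> P" for S
    proof -
      have "card S \<le> card (\<Union>(Nb ` S))"
        using hall that(2) by blast
      moreover have "card (\<Union>(Nb ` S)) \<noteq> card S"
        using False that by blast
      ultimately show ?thesis
        by linarith
    qed
    show ?thesis
    proof (cases "P = {}")
      case False
      then obtain x where x: "x \<in> P"
        by blast
      then have "Nb x \<noteq> {}"
        using hall[of "{x}"] by auto
      then obtain y where y: "y \<in> Nb x"
        by blast
      have "card (P - {x}) < card P"
        using finite_P x by (rule card_Diff1_less)
      then have "\<exists>g. inj_on g (P - {x}) \<and> (\<forall>z\<in>P - {x}. g z \<in> Nb z - {y})"
        using finite_P finite_Nb hall_condition_Diff_vertex[OF finite_P finite_Nb surplus x]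
        by (intro less.hyps) auto
      then obtain g where g: "inj_on g (P - {x})" "\<forall>z\<in>P - {x}. g z \<in> Nb z - {y}"
        by blast
      have "inj_on (g(x := y)) P"
        using g x by (auto simp: inj_on_def)
      then show ?thesis
        using g(2) x y by (intro exI[of _ "g(x := y)"]) auto
    qed simp
  qed
qed

lemma hall_deficiency:
  fixes Nb :: "'a \<Rightarrow> 'b set" and d :: nat
  assumes finite_P: "finite P" and finite_Nb: "\<And>x. x \<in> P \<Longrightarrow> finite (Nb x)"
    and hall: "\<And>S. S \<subseteq> P \<Longrightarrow> card S \<le> card (\<Union>(Nb ` S)) + d"
  shows "\<exists>P' f. P' \<subseteq> P \<and> card P \<le> card P' + d \<and> inj_on f P' \<and> (\<forall>x\<in>P'. f x \<in> Nb x)"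
proof -
  define Nb' :: "'a \<Rightarrow> ('b + nat) set" where "Nb' x = Inl ` Nb x \<union> Inr ` {..<d}" for x
  have "card S \<le> card (\<Union>(Nb' ` S))" if "S \<subseteq> P" for S
  proof (cases "S = {}")
    case False
    have "finite S"
      using that finite_P by (rule finite_subset)
    then have "finite (\<Union>(Nb ` S))"
      using that finite_Nb by auto
    moreover have "\<Union>(Nb' ` S) = Inl ` \<Union>(Nb ` S) \<union> Inr ` {..<d}"
      using False by (auto simp: Nb'_def)
    moreover have "card (Inl ` \<Union>(Nb ` S) \<union> Inr ` {..<d} :: ('b + nat) set)
        = card (Inl ` \<Union>(Nb ` S) :: ('b + nat) set) + card (Inr ` {..<d} :: ('b + nat) set)"
      using \<open>finite (\<Union>(Nb ` S))\<close> by (intro card_Un_disjoint) auto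
    ultimately have "card (\<Union>(Nb' ` S)) = card (\<Union>(Nb ` S)) + d"
      by (simp add: card_image)
    then show ?thesis
      using hall[OF that] by simp
  qed simp
  then obtain g where g: "inj_on g P" "\<forall>x\<in>P. g x \<in> Nb' x"
    using hall_marriage[of P Nb'] finite_P finite_Nb by (auto simp: Nb'_def)
  define P' where "P' = {x\<in>P. isl (g x)}"
  have "P' \<subseteq> P"
    by (simp add: P'_def)
  have "card (P - P') = card (g ` (P - P'))"
    using g(1) by (simp add: card_image inj_on_subset)
  also have "\<dots> \<le> card (Inr ` {..<d} :: ('b + nat) set)"
    using g(2) by (intro card_mono) (auto simp: P'_def Nb'_def)
  finally have "card (P - P') \<le> d"
    by (simp add: card_image)
  moreover have "card P = card P' + card (P - P')"
    using finite_P \<open>P' \<subseteq> P\<close> by (metis card_Un_disjoint Diff_disjoint Un_Diff_cancel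
        sup.absorb2 finite_Diff finite_subset)
  ultimately have "card P \<le> card P' + d"
    by linarith
  moreover have "inj_on (projl \<circ> g) P'"
  proof (rule inj_onI)
    fix x y
    assume "x \<in> P'" "y \<in> P'" "(projl \<circ> g) x = (projl \<circ> g) y"
    then have "g x = g y"
      by (metis P'_def comp_apply mem_Collect_eq sum.collapse(1))
    then show "x = y"
      using g(1) \<open>x \<in> P'\<close> \<open>y \<in> P'\<close> \<open>P' \<subseteq> P\<close> by (auto dest: inj_onD)
  qed
  moreover have "\<forall>x\<in>P'. (projl \<circ> g) x \<in> Nb x"
    using g(2) by (auto simp: P'_def Nb'_def)
  ultimately show ?thesis
    by (intro exI[of _ P'] exI[of _ "projl \<circ> g"]) (auto simp: P'_def)
qed

theorem matching_or_small_cover: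
  fixes r :: "'a \<Rightarrow> 'b \<Rightarrow> bool"
  assumes finite_P: "finite P" and finite_Q: "finite Q"
  shows "(\<exists>P' f. P' \<subseteq> P \<and> card P' = k \<and> inj_on f P' \<and> (\<forall>x\<in>P'. f x \<in> Q \<and> r x (f x))) \<or>
    (\<exists>SP SQ. SP \<subseteq> P \<and> SQ \<subseteq> Q \<and> card SP + card SQ < k \<and>
      (\<forall>x\<in>P. \<forall>y\<in>Q. r x y \<longrightarrow> x \<in> SP \<or> y \<in> SQ))"
proof (cases "card P < k")
  case True
  then show ?thesis
    by (intro disjI2 exI[of _ P] exI[of _ "{}"]) auto
next
  case False
  define d where "d = card P - k"
  define Nb where "Nb x = {y\<in>Q. r x y}" for x
  show ?thesis
  proof (cases "\<forall>S\<subseteq>P. card S \<le> card (\<Union>(Nb ` S)) + d")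
    case True
    then obtain P' f where P': "P' \<subseteq> P" "card P \<le> card P' + d" "inj_on f P'" "\<forall>x\<in>P'. f x \<in> Nb x"
      using hall_deficiency[OF finite_P, of Nb d] finite_Q by (auto simp: Nb_def)
    moreover have "k \<le> card P'"
      using P'(2) False by (simp add: d_def)
    then obtain P'' where "P'' \<subseteq> P'" "card P'' = k"
      by (meson obtain_subset_with_card_n)
    ultimately show ?thesis
      by (intro disjI1 exI[of _ P''] exI[of _ f]) (auto simp: Nb_def intro: inj_on_subset)
  next
    case False
    then obtain S where S: "S \<subseteq> P" "card (\<Union>(Nb ` S)) + d < card S"
      by (auto simp: not_le)
    then have "card (P - S) + card (\<Union>(Nb ` S)) < k"
      using finite_P \<open>\<not> card P < k\<close> card_mono[OF finite_P S(1)]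
      by (simp add: d_def card_Diff_subset finite_subset)
    moreover have "\<forall>x\<in>P. \<forall>y\<in>Q. r x y \<longrightarrow> x \<in> P - S \<or> y \<in> \<Union>(Nb ` S)"
      by (auto simp: Nb_def)
    ultimately show ?thesis
      by (intro disjI2 exI[of _ "P - S"] exI[of _ "\<Union>(Nb ` S)"]) (auto simp: Nb_def)
  qed
qed

section \<open>Components and connected matchings\<close>

definition component :: "'a set set \<Rightarrow> 'a \<Rightarrow> 'a set" where
  "component F v = {u. connected_in F v u}"

lemma connected_in_sym: "connected_in F u v \<Longrightarrow> connected_in F v u"
proof -
  have "symp (adj F)"
    by (auto intro: sympI simp: adj_def insert_commute)
  then show "connected_in F u v \<Longrightarrow> connected_in F v u"
    unfolding connected_in_def by (rule sympD[OF symp_rtranclp])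
qed

lemma connected_in_trans: "connected_in F u v \<Longrightarrow> connected_in F v w \<Longrightarrow> connected_in F u w"
  by (simp add: connected_in_def)

lemma connected_in_edge: "{u, v} \<in> F \<Longrightarrow> connected_in F u v"
  by (simp add: connected_in_def adj_def r_into_rtranclp)

lemma in_component_self [simp]: "v \<in> component F v"
  by (simp add: component_def connected_in_def)

lemma component_eq:
  assumes "u \<in> component F v"
  shows "component F u = component F v"
proof -
  have vu: "connected_in F v u"
    using assms by (simp add: component_def)
  then have uv: "connected_in F u v"
    by (rule connected_in_sym)
  show ?thesis
    unfolding component_def using connected_in_trans[OF vu] connected_in_trans[OF uv] by blast
qed

lemma component_eqI:
  assumes "z \<in> component F u" and "z \<in> component F v"
  shows "component F u = component F v"
  using component_eq[OF assms(1)] component_eq[OF assms(2)] by simp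

lemma components_disjoint:
  assumes "component F u \<noteq> component F v"
  shows "component F u \<inter> component F v = {}"
  using assms component_eqI[of _ F u v] by blast

lemma edge_in_component_iff:
  assumes "{u, v} \<in> F"
  shows "u \<in> component F w \<longleftrightarrow> v \<in> component F w"
proof -
  have uv: "connected_in F u v"
    using assms by (rule connected_in_edge)
  then have vu: "connected_in F v u"
    by (rule connected_in_sym)
  show ?thesis
    unfolding component_def using connected_in_trans[OF _ uv] connected_in_trans[OF _ vu] by blast
qed

lemma edge_stays_in_component:
  assumes "{u, v} \<in> F" and "u \<in> component F w"
  shows "v \<in> component F w"
  using edge_in_component_iff[OF assms(1), of w] assms(2) by blast

lemma has_connected_k_matching_if_inj:
  assumes "finite P" and inj: "inj_on f P" and disjoint: "P \<inter> f ` P = {}"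
    and edges: "\<And>x. x \<in> P \<Longrightarrow> {x, f x} \<in> F" and connected: "P \<subseteq> component F w"
    and "card P = k"
  shows "has_connected_k_matching F k"
proof -
  define M where "M = (\<lambda>x. {x, f x}) ` P"
  have "e \<inter> e' = {}" if "e \<in> M" "e' \<in> M" and "e \<noteq> e'" for e e'
  proof -
    obtain x x' where x: "x \<in> P" "x' \<in> P" "e = {x, f x}" "e' = {x', f x'}"
      using \<open>e \<in> M\<close> \<open>e' \<in> M\<close> by (auto simp: M_def)
    then have "x \<noteq> x'"
      using \<open>e \<noteq> e'\<close> by auto
    then have "f x \<noteq> f x'"
      using inj x(1,2) by (auto dest: inj_onD)
    moreover have "x \<noteq> f x'" "f x \<noteq> x'"
      using disjoint x(1,2) by auto
    ultimately show ?thesis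
      using x(3,4) \<open>x \<noteq> x'\<close> by auto
  qed
  then have "matching F M"
    using edges by (auto simp: matching_def M_def)
  moreover have "inj_on (\<lambda>x. {x, f x}) P"
    using disjoint by (auto intro!: inj_onI simp: doubleton_eq_iff)
  then have "card M = k"
    using \<open>card P = k\<close> by (simp add: M_def card_image)
  moreover have "\<forall>e\<in>M. \<forall>x\<in>e. connected_in F w x"
  proof (intro ballI)
    fix e v
    assume "e \<in> M" "v \<in> e"
    then obtain x where "x \<in> P" "v = x \<or> v = f x"
      by (auto simp: M_def)
    moreover have "f x \<in> component F w" if "x \<in> P"
      using that connected edge_in_component_iff[OF edges] by blast
    ultimately show "connected_in F w v"
      using connected by (auto simp: component_def)
  qed
  ultimately have "connected_k_matching F k M"
    unfolding connected_k_matching_def using \<open>finite P\<close> M_def by blast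
  then show ?thesis
    unfolding has_connected_k_matching_def by blast
qed

section \<open>Dense balanced bipartite graphs\<close>

definition forces_matching :: "nat \<Rightarrow> nat \<Rightarrow> nat \<Rightarrow> nat \<Rightarrow> bool" where
  "forces_matching \<tau> p q k \<longleftrightarrow> k \<le> p \<and> k \<le> q \<and> k + 2 * \<tau> \<le> p + q"

lemma forces_matching_commute: "forces_matching \<tau> p q k \<longleftrightarrow> forces_matching \<tau> q p k"
  by (auto simp: forces_matching_def)

text \<open>\<open>\<tau>\<close> bounds the number of non-neighbours of a vertex on the other side; the minimum
  degree condition \<open>\<delta>(G) > 3N/4\<close> becomes \<open>4\<tau> < N\<close>.\<close>

locale dense_bipartite =
  fixes X Y :: "'a set" and E :: "'a set set" and N \<tau> :: nat
  assumes finite_X: "finite X" and finite_Y: "finite Y"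
    and card_X: "card X = N" and card_Y: "card Y = N"
    and disjoint: "X \<inter> Y = {}"
    and edges_between: "\<And>e. e \<in> E \<Longrightarrow> \<exists>x\<in>X. \<exists>y\<in>Y. e = {x, y}"
    and non_neighbours_X: "\<And>x. x \<in> X \<Longrightarrow> card {y\<in>Y. {x, y} \<notin> E} \<le> \<tau>"
    and non_neighbours_Y: "\<And>y. y \<in> Y \<Longrightarrow> card {x\<in>X. {x, y} \<notin> E} \<le> \<tau>"
    and four_tau_less: "4 * \<tau> < N"

lemma dense_bipartite_swap:
  assumes "dense_bipartite X Y E N \<tau>"
  shows "dense_bipartite Y X E N \<tau>"
proof -
  interpret dense_bipartite X Y E N \<tau>
    by fact
  have "\<exists>y\<in>Y. \<exists>x\<in>X. e = {y, x}" if "e \<in> E" for e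
    using edges_between[OF that] by (metis insert_commute)
  moreover have "{x\<in>X. {y, x} \<notin> E} = {x\<in>X. {x, y} \<notin> E}" "{y\<in>Y. {y, x} \<notin> E} = {y\<in>Y. {x, y} \<notin> E}"
    for x y
    by (simp_all add: insert_commute)
  ultimately show ?thesis
    using finite_X finite_Y card_X card_Y disjoint non_neighbours_X non_neighbours_Y four_tau_less
    by unfold_locales auto
qed

context dense_bipartite
begin

lemma swapped_dense_bipartite: "dense_bipartite Y X E N \<tau>"
  by (rule dense_bipartite_swap) unfold_locales

lemma card_non_neighbours_X:
  assumes "x \<in> X" and "S \<subseteq> Y" and "\<forall>y\<in>S. {x, y} \<notin> E"
  shows "card S \<le> \<tau>"
proof -
  have "card S \<le> card {y\<in>Y. {x, y} \<notin> E}"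
    using assms finite_Y by (intro card_mono) auto
  then show ?thesis
    using non_neighbours_X[OF assms(1)] by linarith
qed

lemma card_non_neighbours_Y:
  assumes "y \<in> Y" and "S \<subseteq> X" and "\<forall>x\<in>S. {x, y} \<notin> E"
  shows "card S \<le> \<tau>"
  using dense_bipartite.card_non_neighbours_X[OF swapped_dense_bipartite assms(1,2)] assms(3)
  by (simp add: insert_commute)

lemma common_neighbour_X:
  assumes "x \<in> X" "x' \<in> X" and "Q \<subseteq> Y" and "2 * \<tau> < card Q"
  shows "\<exists>y\<in>Q. {x, y} \<in> E \<and> {x', y} \<in> E"
proof (rule ccontr)
  assume "\<not> ?thesis"
  then have "Q \<subseteq> {y\<in>Q. {x, y} \<notin> E} \<union> {y\<in>Q. {x', y} \<notin> E}"
    by blast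
  then have "card Q \<le> card ({y\<in>Q. {x, y} \<notin> E} \<union> {y\<in>Q. {x', y} \<notin> E})"
    using finite_subset[OF assms(3) finite_Y] by (intro card_mono) auto
  also have "\<dots> \<le> card {y\<in>Q. {x, y} \<notin> E} + card {y\<in>Q. {x', y} \<notin> E}"
    by (rule card_Un_le)
  also have "\<dots> \<le> \<tau> + \<tau>"
    by (intro add_mono card_non_neighbours_X[OF assms(1)] card_non_neighbours_X[OF assms(2)])
      (use assms(3) in auto)
  finally show False
    using assms(4) by linarith
qed

lemma card_X_split: "card (X \<inter> S) + card (X - S) = N"
  using finite_X card_X by (metis card_Int_Diff inf_commute)

lemma card_Y_split: "card (Y \<inter> S) + card (Y - S) = N"
  using finite_Y card_Y by (metis card_Int_Diff inf_commute)

lemma card_Int_X_Int_Y: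
  assumes "finite K"
  shows "card (X \<inter> K) + card (Y \<inter> K) \<le> card K"
proof -
  have "card (X \<inter> K) + card (Y \<inter> K) = card ((X \<inter> K) \<union> (Y \<inter> K))"
    using assms disjoint by (intro card_Un_disjoint[symmetric]) auto
  also have "\<dots> \<le> card K"
    using assms by (intro card_mono) auto
  finally show ?thesis .
qed

lemma dense_matching:
  assumes "P \<subseteq> X" and "Q \<subseteq> Y" and "forces_matching \<tau> (card P) (card Q) k"
  shows "\<exists>P' f. P' \<subseteq> P \<and> card P' = k \<and> inj_on f P' \<and> (\<forall>x\<in>P'. f x \<in> Q \<and> {x, f x} \<in> E)"
proof -
  have finite_P: "finite P" and finite_Q: "finite Q"
    using finite_subset[OF assms(1) finite_X] finite_subset[OF assms(2) finite_Y] .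
  have sizes: "k \<le> card P" "k \<le> card Q" "k + 2 * \<tau> \<le> card P + card Q"
    using assms(3) by (auto simp: forces_matching_def)
  have no_small_cover: False if SP: "SP \<subseteq> P" and SQ: "SQ \<subseteq> Q" and small: "card SP + card SQ < k"
    and cover: "\<forall>x\<in>P. \<forall>y\<in>Q. {x, y} \<in> E \<longrightarrow> x \<in> SP \<or> y \<in> SQ" for SP SQ
  proof -
    have "card SP < card P" "card SQ < card Q"
      using small sizes by linarith+
    then have "SP \<noteq> P" "SQ \<noteq> Q"
      by auto
    then obtain x0 y0 where x0: "x0 \<in> P - SP" and y0: "y0 \<in> Q - SQ"
      using SP SQ by blast
    have "card (Q - SQ) \<le> \<tau>"
      using x0 assms(1,2) cover by (intro card_non_neighbours_X[of x0]) blast+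
    moreover have "card (P - SP) \<le> \<tau>"
      using y0 assms(1,2) cover by (intro card_non_neighbours_Y[of y0]) blast+
    moreover have "card (P - SP) = card P - card SP" "card (Q - SQ) = card Q - card SQ"
      using card_Diff_subset[OF finite_subset[OF SP finite_P] SP]
        card_Diff_subset[OF finite_subset[OF SQ finite_Q] SQ] .
    ultimately show False
      using small sizes \<open>card SP < card P\<close> \<open>card SQ < card Q\<close> by linarith
  qed
  from matching_or_small_cover[OF finite_P finite_Q, of k "\<lambda>x y. {x, y} \<in> E"]
  show ?thesis
  proof
    assume "\<exists>SP SQ. SP \<subseteq> P \<and> SQ \<subseteq> Q \<and> card SP + card SQ < k \<and>
      (\<forall>x\<in>P. \<forall>y\<in>Q. {x, y} \<in> E \<longrightarrow> x \<in> SP \<or> y \<in> SQ)"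
    then show ?thesis
      using no_small_cover by auto
  qed
qed

lemma dense_side_in_component_X:
  assumes "P \<subseteq> X" and "Q \<subseteq> Y" and "2 * \<tau> < card Q"
    and colored: "\<And>x y. x \<in> P \<Longrightarrow> y \<in> Q \<Longrightarrow> {x, y} \<in> E \<Longrightarrow> {x, y} \<in> F"
  shows "\<exists>w. P \<subseteq> component F w"
proof (cases "P = {}")
  case False
  then obtain x0 where x0: "x0 \<in> P"
    by blast
  have "x \<in> component F x0" if x: "x \<in> P" for x
  proof -
    obtain y where y: "y \<in> Q" "{x0, y} \<in> E" "{x, y} \<in> E"
      using common_neighbour_X[of x0 x Q] x0 x assms(1-3) by blast
    have "y \<in> component F x0"
      using edge_in_component_iff[OF colored[OF x0 y(1,2)], where w = x0] by simp
    then show ?thesis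
      using edge_in_component_iff[OF colored[OF x y(1,3)], where w = x0] by simp
  qed
  then show ?thesis
    by blast
qed simp

lemma dense_side_in_component_Y:
  assumes "P \<subseteq> X" and "Q \<subseteq> Y" and "2 * \<tau> < card P"
    and colored: "\<And>x y. x \<in> P \<Longrightarrow> y \<in> Q \<Longrightarrow> {x, y} \<in> E \<Longrightarrow> {x, y} \<in> F"
  shows "\<exists>w. Q \<subseteq> component F w"
proof (rule dense_bipartite.dense_side_in_component_X[OF swapped_dense_bipartite assms(2,1,3)])
  show "{y, x} \<in> F" if "y \<in> Q" "x \<in> P" "{y, x} \<in> E" for y x
    using colored[OF that(2,1)] that(3) by (simp add: insert_commute)
qed

lemma has_connected_k_matching_dense_pair:
  assumes PX: "P \<subseteq> X" and QY: "Q \<subseteq> Y"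
    and colored: "\<And>x y. x \<in> P \<Longrightarrow> y \<in> Q \<Longrightarrow> {x, y} \<in> E \<Longrightarrow> {x, y} \<in> F"
    and sizes: "forces_matching \<tau> (card P) (card Q) k"
    and spread: "2 * \<tau> < card P \<or> 2 * \<tau> < card Q \<or>
      (\<exists>w. P \<subseteq> component F w) \<or> (\<exists>w. Q \<subseteq> component F w)"
  shows "has_connected_k_matching F k"
proof -
  obtain P' f where P': "P' \<subseteq> P" "card P' = k" "inj_on f P'"
    and f: "\<And>x. x \<in> P' \<Longrightarrow> f x \<in> Q \<and> {x, f x} \<in> E"
    using dense_matching[OF PX QY sizes] by blast
  have F_edges: "{x, f x} \<in> F" if "x \<in> P'" for x
    using colored P'(1) f that by blast
  have "\<exists>w. P \<subseteq> component F w \<or> Q \<subseteq> component F w"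
  proof (cases "2 * \<tau> < card Q")
    case True
    then show ?thesis
      using dense_side_in_component_X[OF PX QY True colored] by blast
  next
    case small_Q: False
    show ?thesis
    proof (cases "2 * \<tau> < card P")
      case True
      then show ?thesis
        using dense_side_in_component_Y[OF PX QY True colored] by blast
    qed (use spread small_Q in blast)
  qed
  then obtain w where "P' \<subseteq> component F w"
  proof (elim exE disjE)
    fix w
    assume "P \<subseteq> component F w"
    then show thesis
      using that P'(1) by blast
  next
    fix w
    assume Q: "Q \<subseteq> component F w"
    have "x \<in> component F w" if "x \<in> P'" for x
      using Q f[OF that] edge_in_component_iff[OF F_edges[OF that], where w = w] by blast
    then show thesis
      using that by blast
  qed
  moreover have "P' \<inter> f ` P' = {}"
    using P'(1) PX QY f disjoint by blast
  moreover have "finite P'"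
    using finite_subset[OF P'(1) finite_subset[OF PX finite_X]] .
  ultimately show ?thesis
    using has_connected_k_matching_if_inj[of P' f F w k] P'(2,3) F_edges by blast
qed

end

section \<open>Colourings without connected matchings\<close>

text \<open>The two colours play symmetric roles; the theorem is the case \<open>F = R\<close>, \<open>F' = B\<close>,
  \<open>k = m\<close>, \<open>k' = n\<close>.\<close>

locale matching_free_coloring = dense_bipartite X Y E N \<tau>
  for X Y :: "'a set" and E :: "'a set set" and N \<tau> :: nat +
  fixes F F' :: "'a set set" and k k' :: nat
  assumes colors_cover: "F \<union> F' = E"
    and k_sum: "k + k' = N + 1"
    and no_F_matching: "\<not> has_connected_k_matching F k"
    and no_F'_matching: "\<not> has_connected_k_matching F' k'"

lemma matching_free_coloring_swap:
  assumes "matching_free_coloring X Y E N \<tau> F F' k k'"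
  shows "matching_free_coloring Y X E N \<tau> F F' k k'"
  using assms dense_bipartite_swap
  unfolding matching_free_coloring_def matching_free_coloring_axioms_def by blast

lemma matching_free_coloring_flip:
  assumes "matching_free_coloring X Y E N \<tau> F F' k k'"
  shows "matching_free_coloring X Y E N \<tau> F' F k' k"
  using assms
  unfolding matching_free_coloring_def matching_free_coloring_axioms_def by (simp add: ac_simps)

context matching_free_coloring
begin

lemma swapped: "matching_free_coloring Y X E N \<tau> F F' k k'"
  by (rule matching_free_coloring_swap) unfold_locales

lemma flipped: "matching_free_coloring X Y E N \<tau> F' F k' k"
  by (rule matching_free_coloring_flip) unfold_locales

lemma component_cover:
  obtains K where "finite K" and "K \<subseteq> component F w" and "card K < k"
    and "\<And>x y. {x, y} \<in> F \<Longrightarrow> x \<in> component F w \<Longrightarrow> x \<in> K \<or> y \<in> K"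
proof -
  let ?C = "component F w"
  have finite_XC: "finite (X \<inter> ?C)"
    using finite_X by simp
  have no_matching: False
    if P': "P' \<subseteq> X \<inter> ?C" "card P' = k" "inj_on f P'" and f: "\<forall>x\<in>P'. f x \<in> Y \<and> {x, f x} \<in> F"
    for P' f
  proof -
    have "P' \<inter> f ` P' = {}"
      using P'(1) f disjoint by blast
    then have "has_connected_k_matching F k"
      using has_connected_k_matching_if_inj[OF finite_subset[OF P'(1) finite_XC] P'(3)] f P'(1,2)
      by blast
    then show False
      using no_F_matching by blast
  qed
  from matching_or_small_cover[OF finite_XC finite_Y, of k "\<lambda>x y. {x, y} \<in> F"]
  obtain SP SQ where SP: "SP \<subseteq> X \<inter> ?C" and SQ: "SQ \<subseteq> Y" and small: "card SP + card SQ < k"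
    and cover: "\<forall>x\<in>X \<inter> ?C. \<forall>y\<in>Y. {x, y} \<in> F \<longrightarrow> x \<in> SP \<or> y \<in> SQ"
    using no_matching by blast
  show thesis
  proof
    show "finite (SP \<union> SQ \<inter> ?C)"
      using finite_subset[OF SP finite_XC] finite_subset[OF SQ finite_Y] by blast
    show "SP \<union> SQ \<inter> ?C \<subseteq> ?C"
      using SP by blast
    have "card (SP \<union> SQ \<inter> ?C) \<le> card SP + card SQ"
      using card_Un_le[of SP "SQ \<inter> ?C"] card_mono[OF finite_subset[OF SQ finite_Y] Int_lower1, of ?C]
      by linarith
    then show "card (SP \<union> SQ \<inter> ?C) < k"
      using small by linarith
    show "x \<in> SP \<union> SQ \<inter> ?C \<or> y \<in> SP \<union> SQ \<inter> ?C"
      if xy: "{x, y} \<in> F" and x: "x \<in> ?C" for x y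
    proof -
      have "y \<in> ?C"
        using xy x edge_in_component_iff[of x y F w] by blast
      obtain a b where ab: "a \<in> X" "b \<in> Y" "{x, y} = {a, b}"
        using edges_between xy colors_cover by blast
      have "a \<in> ?C" "b \<in> ?C"
        using x \<open>y \<in> ?C\<close> ab(3) by (auto simp: doubleton_eq_iff)
      moreover have "{a, b} \<in> F"
        using xy ab(3) by simp
      ultimately have "a \<in> SP \<or> b \<in> SQ"
        using cover ab(1,2) by blast
      then show ?thesis
        using ab(3) \<open>a \<in> ?C\<close> \<open>b \<in> ?C\<close> by (auto simp: doubleton_eq_iff)
    qed
  qed
qed

lemma component_not_spanning: "\<not> X \<subseteq> component F w"
proof
  assume X_sub: "X \<subseteq> component F w"
  obtain K where K: "finite K" "K \<subseteq> component F w" "card K < k"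
    and covers: "\<And>x y. {x, y} \<in> F \<Longrightarrow> x \<in> component F w \<Longrightarrow> x \<in> K \<or> y \<in> K"
    by (rule component_cover[where w = w]) blast
  have colored: "{x, y} \<in> F'" if "x \<in> X - K" "y \<in> Y - K" "{x, y} \<in> E" for x y
  proof (rule ccontr)
    assume "{x, y} \<notin> F'"
    then have "{x, y} \<in> F"
      using that(3) colors_cover by blast
    moreover have "x \<in> component F w"
      using that(1) X_sub by blast
    ultimately show False
      using covers that(1,2) by fastforce
  qed
  have "card (X \<inter> K) + card (Y \<inter> K) \<le> card K"
    by (rule card_Int_X_Int_Y[OF K(1)])
  moreover have "card (X \<inter> K) + card (X - K) = N" "card (Y \<inter> K) + card (Y - K) = N"
    by (rule card_X_split card_Y_split)+
  ultimately have "forces_matching \<tau> (card (X - K)) (card (Y - K)) k'"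
    and "2 * \<tau> < card (X - K) \<or> 2 * \<tau> < card (Y - K)"
    unfolding forces_matching_def using K(3) k_sum four_tau_less by linarith+
  then have "has_connected_k_matching F' k'"
    using has_connected_k_matching_dense_pair[OF Diff_subset Diff_subset colored] by blast
  then show False
    using no_F'_matching by blast
qed

end

section \<open>Split configurations\<close>

text \<open>The inequalities below come from \<open>has_connected_k_matching_dense_pair\<close>, applied to pairs
  of sets between which every edge has a forced colour. They contradict each other when
  \<open>k' < k\<close>, and also when \<open>k < k'\<close> if both cells \<open>X \<inter> C \<inter> D1\<close> and \<open>Y \<inter> C \<inter> D2\<close>
  are heavy.\<close>

locale split_configuration = matching_free_coloring X Y E N \<tau> F F' k k'
  for X Y :: "'a set" and E :: "'a set set" and N \<tau> :: nat and F F' :: "'a set set"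
    and k k' :: nat +
  fixes c d1 d2 :: 'a and K :: "'a set"
  assumes distinct_components: "component F' d1 \<noteq> component F' d2"
    and X_outside: "X - component F c \<subseteq> component F' d2"
    and Y_outside: "Y - component F c \<subseteq> component F' d1"
    and finite_K: "finite K" and K_subset: "K \<subseteq> component F c" and card_K: "card K < k"
    and K_covers: "\<And>x y. {x, y} \<in> F \<Longrightarrow> x \<in> component F c \<Longrightarrow> x \<in> K \<or> y \<in> K"

lemma split_configuration_swap:
  assumes "split_configuration X Y E N \<tau> F F' k k' c d1 d2 K"
  shows "split_configuration Y X E N \<tau> F F' k k' c d2 d1 K"
proof -
  interpret split_configuration X Y E N \<tau> F F' k k' c d1 d2 K
    by fact
  show ?thesis
    using swapped distinct_components X_outside Y_outside finite_K K_subset card_K K_covers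
    by (simp add: split_configuration_def split_configuration_axioms_def)
qed

context split_configuration
begin

abbreviation C where "C \<equiv> component F c"
abbreviation D1 where "D1 \<equiv> component F' d1"
abbreviation D2 where "D2 \<equiv> component F' d2"

lemma swapped_configuration: "split_configuration Y X E N \<tau> F F' k k' c d2 d1 K"
  by (rule split_configuration_swap) unfold_locales

lemma edge_leaving_C:
  assumes "{x, y} \<in> E" and "x \<in> C" and "y \<notin> C"
  shows "{x, y} \<in> F'"
  using assms colors_cover edge_stays_in_component[of x y F c] by blast

lemma edge_between_D1_D2:
  assumes "{x, y} \<in> E" and "x \<in> D2" and "y \<in> D1"
  shows "{x, y} \<in> F"
proof (rule ccontr)
  assume "{x, y} \<notin> F"
  then have "{x, y} \<in> F'"
    using assms(1) colors_cover by blast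
  then have "y \<in> D2"
    using assms(2) by (rule edge_stays_in_component)
  then show False
    using assms(3) components_disjoint[OF distinct_components] by blast
qed

lemma edge_avoiding_K:
  assumes "{x, y} \<in> E" and "x \<in> C" and "x \<notin> K" and "y \<notin> K"
  shows "{x, y} \<in> F'"
  using assms colors_cover K_covers by blast

lemma no_edge_C_minus_D1_to_outside:
  assumes "x \<in> C - D1" and "y \<in> Y - C"
  shows "{x, y} \<notin> E"
proof
  assume "{x, y} \<in> E"
  then have "{x, y} \<in> F'"
    using assms by (auto intro: edge_leaving_C)
  then have "{y, x} \<in> F'"
    by (simp add: insert_commute)
  moreover have "y \<in> D1"
    using assms(2) Y_outside by blast
  ultimately have "x \<in> D1"
    by (rule edge_stays_in_component)
  then show False
    using assms(1) by blast
qed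

lemma outside_C_nonempty: "X - C \<noteq> {}" "Y - C \<noteq> {}"
  using component_not_spanning[of c] matching_free_coloring.component_not_spanning[OF swapped, of c]
  by blast+

lemma not_forces_matching_C_outside: "\<not> forces_matching \<tau> (card (X \<inter> C)) (card (Y - C)) k'"
proof
  assume sizes: "forces_matching \<tau> (card (X \<inter> C)) (card (Y - C)) k'"
  have colored: "{x, y} \<in> F'" if "x \<in> X \<inter> C" "y \<in> Y - C" "{x, y} \<in> E" for x y
    using that by (auto intro: edge_leaving_C)
  have "\<exists>w. Y - C \<subseteq> component F' w"
    using Y_outside by blast
  then have "has_connected_k_matching F' k'"
    using has_connected_k_matching_dense_pair[OF Int_lower1 Diff_subset colored sizes] by blast
  then show False
    using no_F'_matching by blast
qed

lemma not_forces_matching_outside_C: "\<not> forces_matching \<tau> (card (X - C)) (card (Y \<inter> C)) k'"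
  using split_configuration.not_forces_matching_C_outside[OF swapped_configuration]
  by (simp add: forces_matching_commute)

lemma not_forces_matching_outside:
  assumes "2 * \<tau> < card (X - C) \<or> 2 * \<tau> < card (Y - C)"
  shows "\<not> forces_matching \<tau> (card (X - C)) (card (Y - C)) k"
proof
  assume sizes: "forces_matching \<tau> (card (X - C)) (card (Y - C)) k"
  have colored: "{x, y} \<in> F" if "x \<in> X - C" "y \<in> Y - C" "{x, y} \<in> E" for x y
    using that X_outside Y_outside by (auto intro: edge_between_D1_D2)
  have "has_connected_k_matching F k"
    using has_connected_k_matching_dense_pair[OF Diff_subset Diff_subset colored sizes] assms
    by blast
  then show False
    using no_F_matching by blast
qed

lemma card_Y_C_minus_K:
  "card (Y \<inter> C - K) < k' \<or> card (X - K) + card (Y \<inter> C - K) \<le> N"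
proof (rule ccontr)
  assume "\<not> ?thesis"
  then have big: "k' \<le> card (Y \<inter> C - K)" "N < card (X - K) + card (Y \<inter> C - K)"
    by auto
  have "card (X \<inter> K) < k"
    using card_Int_X_Int_Y[OF finite_K] card_K by linarith
  then have "forces_matching \<tau> (card (X - K)) (card (Y \<inter> C - K)) k'"
    and "2 * \<tau> < card (X - K) \<or> 2 * \<tau> < card (Y \<inter> C - K)"
    using big card_X_split[of K] k_sum four_tau_less unfolding forces_matching_def by linarith+
  moreover have "{x, y} \<in> F'" if "x \<in> X - K" "y \<in> Y \<inter> C - K" "{x, y} \<in> E" for x y
  proof -
    have "{y, x} \<in> F'"
      using that by (intro edge_avoiding_K) (auto simp: insert_commute)
    then show ?thesis
      by (simp add: insert_commute)
  qed
  ultimately have "has_connected_k_matching F' k'"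
    using has_connected_k_matching_dense_pair[OF Diff_subset, of "Y \<inter> C - K"] by blast
  then show False
    using no_F'_matching by blast
qed

lemma card_X_C_minus_K:
  "card (X \<inter> C - K) < k' \<or> card (Y - K) + card (X \<inter> C - K) \<le> N"
  by (rule split_configuration.card_Y_C_minus_K[OF swapped_configuration])

lemma cells_covered_by_K:
  "card (X \<inter> C \<inter> D1) \<le> card (X \<inter> K) \<or> card (Y \<inter> C \<inter> D2) \<le> card (Y \<inter> K) \<or>
    (card (X \<inter> C \<inter> D1) \<le> card (X \<inter> K) + \<tau> \<and> card (Y \<inter> C \<inter> D2) \<le> card (Y \<inter> K) + \<tau>)"
proof -
  let ?A = "X \<inter> C \<inter> D1" and ?B = "Y \<inter> C \<inter> D2"
  have no_edge: "{x, y} \<notin> E" if "x \<in> ?A - K" "y \<in> ?B - K" for x y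
  proof
    assume "{x, y} \<in> E"
    then have "{y, x} \<in> F"
      using that by (intro edge_between_D1_D2) (auto simp: insert_commute)
    then show False
      using that K_covers by blast
  qed
  have card_le: "card S \<le> card (S - K) + card (X' \<inter> K)" if "S \<subseteq> X'" and "finite X'" for S X'
  proof -
    have "card S \<le> card ((S - K) \<union> (X' \<inter> K))"
      using that finite_subset[OF that] by (intro card_mono) auto
    then show ?thesis
      using card_Un_le[of "S - K" "X' \<inter> K"] by linarith
  qed
  have A_le: "card ?A \<le> card (?A - K) + card (X \<inter> K)"
    using finite_X by (intro card_le) auto
  have B_le: "card ?B \<le> card (?B - K) + card (Y \<inter> K)"
    using finite_Y by (intro card_le) auto
  consider "?A - K = {}" | "?B - K = {}" | a b where "a \<in> ?A - K" "b \<in> ?B - K"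
    by blast
  then show ?thesis
  proof cases
    case 1
    then have "card ?A \<le> card (X \<inter> K)"
      using A_le by (metis card.empty add_0)
    then show ?thesis
      by blast
  next
    case 2
    then have "card ?B \<le> card (Y \<inter> K)"
      using B_le by (metis card.empty add_0)
    then show ?thesis
      by blast
  next
    case 3
    have "card (?B - K) \<le> \<tau>"
      using 3 no_edge by (intro card_non_neighbours_X[of a]) auto
    moreover have "card (?A - K) \<le> \<tau>"
      using 3 no_edge by (intro card_non_neighbours_Y[of b]) auto
    ultimately show ?thesis
      using A_le B_le by linarith
  qed
qed

lemma card_C_minus_D1:
  "card (X \<inter> C - D1) \<le> \<tau>" "card (X \<inter> C - D1) = 0 \<or> card (Y - C) \<le> \<tau>"
proof -
  obtain y0 where "y0 \<in> Y - C"
    using outside_C_nonempty by blast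
  then show "card (X \<inter> C - D1) \<le> \<tau>"
    using no_edge_C_minus_D1_to_outside by (intro card_non_neighbours_Y[of y0]) auto
  show "card (X \<inter> C - D1) = 0 \<or> card (Y - C) \<le> \<tau>"
  proof (cases "X \<inter> C - D1 = {}")
    case False
    then obtain x0 where "x0 \<in> X \<inter> C - D1"
      by blast
    then have "card (Y - C) \<le> \<tau>"
      using no_edge_C_minus_D1_to_outside by (intro card_non_neighbours_X[of x0]) auto
    then show ?thesis
      by blast
  qed (simp only: card.empty simp_thms)
qed

lemma card_C_minus_D2:
  "card (Y \<inter> C - D2) \<le> \<tau>" "card (Y \<inter> C - D2) = 0 \<or> card (X - C) \<le> \<tau>"
  by (rule split_configuration.card_C_minus_D1[OF swapped_configuration])+

lemma card_cells:
  "card (X \<inter> C \<inter> D1) + card (X \<inter> C - D1) = card (X \<inter> C)"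
  "card (Y \<inter> C \<inter> D2) + card (Y \<inter> C - D2) = card (Y \<inter> C)"
  using card_Int_Diff[of "X \<inter> C" D1] card_Int_Diff[of "Y \<inter> C" D2] finite_X finite_Y by auto

lemma card_K_parts:
  "card (X \<inter> K) + card (Y \<inter> K) < k"
  "card (X \<inter> C - K) + card (X \<inter> K) = card (X \<inter> C)"
  "card (Y \<inter> C - K) + card (Y \<inter> K) = card (Y \<inter> C)"
proof -
  show "card (X \<inter> K) + card (Y \<inter> K) < k"
    using card_Int_X_Int_Y[OF finite_K] card_K by linarith
  have "X \<inter> C \<inter> K = X \<inter> K" "Y \<inter> C \<inter> K = Y \<inter> K"
    using K_subset by blast+
  then show "card (X \<inter> C - K) + card (X \<inter> K) = card (X \<inter> C)"
    and "card (Y \<inter> C - K) + card (Y \<inter> K) = card (Y \<inter> C)"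
    using card_Int_Diff[of "X \<inter> C" K] card_Int_Diff[of "Y \<inter> C" K] finite_X finite_Y by auto
qed

lemma k'_less_k_contradiction:
  assumes "k' < k"
  shows False
proof -
  let ?a = "card (X \<inter> C)" and ?a' = "card (X - C)" and ?b = "card (Y \<inter> C)" and ?b' = "card (Y - C)"
  note counts = card_X_split[of C] card_Y_split[of C] card_X_split[of K] card_Y_split[of K]
    card_cells card_K_parts card_C_minus_D1(1) card_C_minus_D2(1)
  have k: "2 * \<tau> < k" "2 * k' \<le> N"
    using assms k_sum four_tau_less by linarith+
  have Q1: "?a < k' \<or> ?b' < k' \<or> ?a + ?b' < k' + 2 * \<tau>"
    using not_forces_matching_C_outside unfolding forces_matching_def by linarith
  have Q2: "?a' < k' \<or> ?b < k' \<or> ?a' + ?b < k' + 2 * \<tau>"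
    using not_forces_matching_outside_C unfolding forces_matching_def by linarith
  have Q3: "?a' < k \<or> ?b' < k"
  proof (rule ccontr)
    assume big: "\<not> (?a' < k \<or> ?b' < k)"
    then have "\<not> forces_matching \<tau> ?a' ?b' k"
      using k by (intro not_forces_matching_outside) linarith
    then show False
      using big k unfolding forces_matching_def by linarith
  qed
  have C_big: "k \<le> ?a" "k \<le> ?b"
    using Q1 Q2 Q3 card_X_split[of C] card_Y_split[of C] k k_sum by (elim disjE; linarith)+
  have "card (Y \<inter> C - K) < k'" "card (X \<inter> C - K) < k'"
    using card_Y_C_minus_K card_X_C_minus_K counts C_big by (elim disjE; linarith)+
  then show False
    using cells_covered_by_K card_C_minus_D1(2) card_C_minus_D2(2)
  proof (elim disjE conjE)
  qed (use counts k k_sum four_tau_less C_big in linarith)+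
qed

lemma k_less_k'_contradiction:
  assumes "k < k'" and heavy_cells: "\<tau> < card (X \<inter> C \<inter> D1)" "\<tau> < card (Y \<inter> C \<inter> D2)"
  shows False
proof -
  let ?a' = "card (X - C)" and ?b' = "card (Y - C)"
  note counts = card_X_split[of C] card_Y_split[of C] card_X_split[of K] card_Y_split[of K]
    card_cells card_K_parts card_C_minus_D1(1) card_C_minus_D2(1)
  have k: "2 * \<tau> < k'" "2 * k \<le> N"
    using assms k_sum four_tau_less by linarith+
  have outside_small: "?a' + ?b' \<le> N"
  proof (rule ccontr)
    assume big: "\<not> ?a' + ?b' \<le> N"
    then have "\<not> forces_matching \<tau> ?a' ?b' k"
      using four_tau_less by (intro not_forces_matching_outside) linarith
    then have "?a' < k \<or> ?b' < k"
      using big k_sum k unfolding forces_matching_def by linarith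
    then show False
      using not_forces_matching_C_outside not_forces_matching_outside_C big counts k_sum k
      unfolding forces_matching_def by (elim disjE) linarith+
  qed
  have "card (Y \<inter> C - K) < k'" "card (X \<inter> C - K) < k'"
    using card_Y_C_minus_K card_X_C_minus_K counts k k_sum by (elim disjE; linarith)+
  then show False
    using cells_covered_by_K card_C_minus_D1(2) card_C_minus_D2(2)
  proof (elim disjE conjE)
  qed (use counts k k_sum four_tau_less heavy_cells outside_small in linarith)+
qed

end

context matching_free_coloring
begin

lemma split_configuration_impossible:
  assumes "component F' d1 \<noteq> component F' d2"
    and "X - component F c \<subseteq> component F' d2" and "Y - component F c \<subseteq> component F' d1"
    and "k' < k \<or> k < k' \<and> \<tau> < card (X \<inter> component F c \<inter> component F' d1)
      \<and> \<tau> < card (Y \<inter> component F c \<inter> component F' d2)"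
  shows False
proof -
  obtain K where "finite K" "K \<subseteq> component F c" "card K < k"
    and "\<And>x y. {x, y} \<in> F \<Longrightarrow> x \<in> component F c \<Longrightarrow> x \<in> K \<or> y \<in> K"
    by (rule component_cover[where w = c]) blast
  then interpret split_configuration X Y E N \<tau> F F' k k' c d1 d2 K
    using assms(1-3) by unfold_locales
  show False
    using assms(4) k'_less_k_contradiction k_less_k'_contradiction by blast
qed

section \<open>Heavy cells\<close>

text \<open>A cell is the intersection of an \<open>F\<close>-component with an \<open>F'\<close>-component.\<close>

lemma exists_cross_pair:
  obtains x1 x2 where "x1 \<in> X" "x2 \<in> X"
    and "component F x1 \<noteq> component F x2" and "component F' x1 \<noteq> component F' x2"
proof -
  have "X \<noteq> {}"
    using card_X four_tau_less by auto
  then obtain x0 where x0: "x0 \<in> X"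
    by blast
  obtain x1 where x1: "x1 \<in> X" "x1 \<notin> component F x0"
    using component_not_spanning[of x0] by blast
  obtain x2 where x2: "x2 \<in> X" "x2 \<notin> component F' x0"
    using matching_free_coloring.component_not_spanning[OF flipped, of x0] by blast
  have F_x1: "component F x1 \<noteq> component F x0" and F'_x2: "component F' x2 \<noteq> component F' x0"
    using x1(2) x2(2) in_component_self by metis+
  consider "component F' x1 \<noteq> component F' x0" | "component F x2 \<noteq> component F x0"
    | "component F' x1 = component F' x0" "component F x2 = component F x0"
    by blast
  then show thesis
  proof cases
    case 1
    then show thesis
      using that[OF x1(1) x0 F_x1] by blast
  next
    case 2
    then show thesis
      using that[OF x2(1) x0 _ F'_x2] by blast
  next
    case 3
    then show thesis
      using that[OF x1(1) x2(1)] F_x1 F'_x2 by simp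
  qed
qed

lemma common_neighbour_in_cross_cell:
  assumes "{x1, y} \<in> F" and "{x2, y} \<in> E" and "component F x1 \<noteq> component F x2"
  shows "y \<in> component F x1 \<inter> component F' x2"
proof -
  note in_component = edge_stays_in_component[OF _ in_component_self]
  have y1: "y \<in> component F x1"
    using assms(1) by (rule in_component)
  have "{x2, y} \<notin> F"
  proof
    assume "{x2, y} \<in> F"
    then have "y \<in> component F x2"
      by (rule in_component)
    then show False
      using assms(3) component_eqI[OF y1] by blast
  qed
  then have "{x2, y} \<in> F'"
    using assms(2) colors_cover by blast
  then have "y \<in> component F' x2"
    by (rule in_component)
  then show ?thesis
    using y1 by blast
qed

lemma card_cross_cells:
  assumes x: "x1 \<in> X" "x2 \<in> X"
    and distinct: "component F x1 \<noteq> component F x2" "component F' x1 \<noteq> component F' x2"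
  shows "N \<le> card (Y \<inter> component F x1 \<inter> component F' x2)
    + card (Y \<inter> component F x2 \<inter> component F' x1) + 2 * \<tau>"
proof -
  let ?c12 = "Y \<inter> component F x1 \<inter> component F' x2"
    and ?c21 = "Y \<inter> component F x2 \<inter> component F' x1"
  let ?W = "{y\<in>Y. {x1, y} \<in> E \<and> {x2, y} \<in> E}"
  have "y \<in> ?c12 \<union> ?c21" if y: "y \<in> ?W" for y
  proof (cases "{x1, y} \<in> F")
    case True
    moreover have "{x2, y} \<in> E"
      using y by blast
    ultimately have "y \<in> component F x1 \<inter> component F' x2"
      by (rule common_neighbour_in_cross_cell[OF _ _ distinct(1)])
    then show ?thesis
      using y by blast
  next
    case False
    then have "{x1, y} \<in> F'"
      using y colors_cover by blast
    moreover have "{x2, y} \<in> E"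
      using y by blast
    ultimately have "y \<in> component F' x1 \<inter> component F x2"
      by (rule matching_free_coloring.common_neighbour_in_cross_cell[OF flipped _ _ distinct(2)])
    then show ?thesis
      using y by blast
  qed
  then have "card ?W \<le> card (?c12 \<union> ?c21)"
    using finite_Y by (intro card_mono) auto
  also have "\<dots> \<le> card ?c12 + card ?c21"
    by (rule card_Un_le)
  finally have W: "card ?W \<le> card ?c12 + card ?c21" .
  have "card (Y - ?W) \<le> card ({y\<in>Y. {x1, y} \<notin> E} \<union> {y\<in>Y. {x2, y} \<notin> E})"
    using finite_Y by (intro card_mono) auto
  also have "\<dots> \<le> card {y\<in>Y. {x1, y} \<notin> E} + card {y\<in>Y. {x2, y} \<notin> E}"
    by (rule card_Un_le)
  finally have "card (Y - ?W) \<le> 2 * \<tau>"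
    using non_neighbours_X[OF x(1)] non_neighbours_X[OF x(2)] by linarith
  moreover have "Y \<inter> ?W = ?W"
    by blast
  then have "card ?W + card (Y - ?W) = N"
    using card_Y_split[of ?W] by simp
  ultimately show ?thesis
    using W by linarith
qed

lemma heavy_cell_attracts:
  assumes heavy: "\<tau> < card (Y \<inter> component F a \<inter> component F' b)" and "x \<in> X"
  shows "x \<in> component F a \<or> x \<in> component F' b"
proof (rule ccontr)
  assume outside: "\<not> ?thesis"
  have "{x, y} \<notin> E" if y: "y \<in> Y \<inter> component F a \<inter> component F' b" for y
  proof
    assume "{x, y} \<in> E"
    then have "{x, y} \<in> F \<or> {x, y} \<in> F'"
      using colors_cover by blast
    then show False
      using y outside edge_in_component_iff[of x y F a] edge_in_component_iff[of x y F' b] by blast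
  qed
  then have "card (Y \<inter> component F a \<inter> component F' b) \<le> \<tau>"
    using \<open>x \<in> X\<close> by (intro card_non_neighbours_X) auto
  then show False
    using heavy by linarith
qed

lemma card_X_outside_component:
  assumes X_covered: "X \<subseteq> component F a \<union> component F' b"
    and y: "y \<in> Y" "y \<notin> component F a" "y \<in> component F' b"
  shows "card (X - component F' b) \<le> \<tau>"
proof (rule card_non_neighbours_Y[OF y(1)])
  show "\<forall>x\<in>X - component F' b. {x, y} \<notin> E"
  proof (intro ballI notI)
    fix x
    assume x: "x \<in> X - component F' b" and "{x, y} \<in> E"
    then have "{x, y} \<in> F \<or> {x, y} \<in> F'"
      using colors_cover by blast
    then show False
      using x y X_covered edge_in_component_iff[of x y F a] edge_in_component_iff[of x y F' b]
      by blast
  qed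
qed auto

lemma card_cell_if_sides_covered:
  assumes X_covered: "X \<subseteq> component F a \<union> component F' b"
    and Y_covered: "Y \<subseteq> component F a \<union> component F' b"
  shows "N \<le> card (X \<inter> component F a \<inter> component F' b) + 2 * \<tau>"
proof -
  let ?C = "component F a" and ?D = "component F' b"
  obtain ya where ya: "ya \<in> Y" "ya \<notin> ?C"
    using matching_free_coloring.component_not_spanning[OF swapped, of a] by blast
  obtain yb where yb: "yb \<in> Y" "yb \<notin> ?D"
    using matching_free_coloring.component_not_spanning[OF matching_free_coloring_swap[OF flipped]]
    by blast
  have "card (X - ?D) \<le> \<tau>"
    using ya Y_covered by (intro card_X_outside_component[OF X_covered]) auto
  moreover have "card (X - ?C) \<le> \<tau>"
    using yb Y_covered X_covered
    by (intro matching_free_coloring.card_X_outside_component[OF flipped]) auto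
  moreover have "card X \<le> card (X \<inter> ?C \<inter> ?D) + card (X - ?C) + card (X - ?D)"
  proof -
    have "card X \<le> card ((X \<inter> ?C \<inter> ?D) \<union> (X - ?C) \<union> (X - ?D))"
      using finite_X by (intro card_mono) auto
    also have "\<dots> \<le> card (X \<inter> ?C \<inter> ?D) + card (X - ?C) + card (X - ?D)"
      using card_Un_le[of "(X \<inter> ?C \<inter> ?D) \<union> (X - ?C)" "X - ?D"]
        card_Un_le[of "X \<inter> ?C \<inter> ?D" "X - ?C"] by linarith
    finally show ?thesis .
  qed
  ultimately show ?thesis
    using card_X by linarith
qed

lemma heavy_cell_inside_covers:
  assumes "finite K" and K_covers: "\<And>x y. {x, y} \<in> F \<Longrightarrow> x \<in> component F a \<Longrightarrow> x \<in> K \<or> y \<in> K"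
    and "finite L" and L_covers: "\<And>x y. {x, y} \<in> F' \<Longrightarrow> x \<in> component F' b \<Longrightarrow> x \<in> L \<or> y \<in> L"
    and small: "card K + card L < N"
    and heavy: "2 * \<tau> \<le> card (X \<inter> component F a \<inter> component F' b)"
  shows "X \<inter> component F a \<inter> component F' b \<subseteq> K \<union> L"
proof
  let ?A = "X \<inter> component F a \<inter> component F' b" and ?W = "K \<union> L"
  have "finite ?W"
    using \<open>finite K\<close> \<open>finite L\<close> by blast
  have W_small: "card (X \<inter> ?W) + card (Y \<inter> ?W) < N"
    using card_Int_X_Int_Y[OF \<open>finite ?W\<close>] card_Un_le[of K L] small by linarith
  have no_edge: "{x, y} \<notin> E" if "x \<in> ?A - ?W" "y \<notin> ?W" for x y
  proof
    assume "{x, y} \<in> E"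
    then have "{x, y} \<in> F \<or> {x, y} \<in> F'"
      using colors_cover by blast
    moreover have "x \<in> component F a" "x \<in> component F' b"
      using that(1) by auto
    ultimately have "x \<in> K \<or> y \<in> K \<or> x \<in> L \<or> y \<in> L"
      using K_covers L_covers by blast
    then show False
      using that by blast
  qed
  fix x0
  assume "x0 \<in> ?A"
  show "x0 \<in> ?W"
  proof (rule ccontr)
    assume "x0 \<notin> ?W"
    have "card (Y - ?W) \<le> \<tau>"
      using \<open>x0 \<in> ?A\<close> \<open>x0 \<notin> ?W\<close> no_edge by (intro card_non_neighbours_X[of x0]) auto
    moreover have "card (Y \<inter> ?W) + card (Y - ?W) = N"
      by (rule card_Y_split)
    ultimately have "card (Y - ?W) \<noteq> 0"
      using W_small by linarith
    then obtain y0 where y0: "y0 \<in> Y - ?W"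
      by (metis card.empty ex_in_conv)
    have "card (?A - ?W) \<le> \<tau>"
      using y0 no_edge by (intro card_non_neighbours_Y[of y0]) auto
    moreover have "card ?A \<le> card (?A - ?W) + card (X \<inter> ?W)"
    proof -
      have "card ?A \<le> card ((?A - ?W) \<union> (X \<inter> ?W))"
        using finite_X by (intro card_mono) auto
      then show ?thesis
        using card_Un_le[of "?A - ?W" "X \<inter> ?W"] by linarith
    qed
    ultimately show False
      using heavy W_small \<open>card (Y - ?W) \<le> \<tau>\<close> \<open>card (Y \<inter> ?W) + card (Y - ?W) = N\<close>
      by linarith
  qed
qed

lemma sides_covered_by_two_components_impossible:
  assumes X_covered: "X \<subseteq> component F a \<union> component F' b"
    and Y_covered: "Y \<subseteq> component F a \<union> component F' b"
  shows False
proof -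
  let ?A = "X \<inter> component F a \<inter> component F' b" and ?B = "Y \<inter> component F a \<inter> component F' b"
  obtain K where K: "finite K" "card K < k"
    and K_covers: "\<And>x y. {x, y} \<in> F \<Longrightarrow> x \<in> component F a \<Longrightarrow> x \<in> K \<or> y \<in> K"
    using component_cover[where w = a] by metis
  obtain L where L: "finite L" "card L < k'"
    and L_covers: "\<And>x y. {x, y} \<in> F' \<Longrightarrow> x \<in> component F' b \<Longrightarrow> x \<in> L \<or> y \<in> L"
    using matching_free_coloring.component_cover[OF flipped, where w = b] by metis
  have small: "card K + card L < N"
    using K(2) L(2) k_sum by linarith
  have "N \<le> card ?A + 2 * \<tau>"
    using card_cell_if_sides_covered[OF X_covered Y_covered] .
  have "?A \<subseteq> K \<union> L"
  proof (rule heavy_cell_inside_covers)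
    show "2 * \<tau> \<le> card ?A"
      using \<open>N \<le> card ?A + 2 * \<tau>\<close> four_tau_less by linarith
  qed (fact K(1) K_covers L(1) L_covers small)+
  have "N \<le> card ?B + 2 * \<tau>"
    using matching_free_coloring.card_cell_if_sides_covered[OF swapped Y_covered X_covered] .
  have "?B \<subseteq> K \<union> L"
  proof (rule matching_free_coloring.heavy_cell_inside_covers[OF swapped])
    show "2 * \<tau> \<le> card ?B"
      using \<open>N \<le> card ?B + 2 * \<tau>\<close> four_tau_less by linarith
  qed (fact K(1) K_covers L(1) L_covers small)+
  have "card ?A + card ?B = card (?A \<union> ?B)"
    using finite_X finite_Y disjoint by (intro card_Un_disjoint[symmetric]) auto
  also have "\<dots> \<le> card (K \<union> L)"
    using \<open>?A \<subseteq> K \<union> L\<close> \<open>?B \<subseteq> K \<union> L\<close> K(1) L(1) by (intro card_mono) auto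
  also have "\<dots> \<le> card K + card L"
    by (rule card_Un_le)
  finally show False
    using small \<open>N \<le> card ?A + 2 * \<tau>\<close> \<open>N \<le> card ?B + 2 * \<tau>\<close> four_tau_less by linarith
qed

end

locale counterexample = matching_free_coloring X Y E N \<tau> R B m n
  for X Y :: "'a set" and E :: "'a set set" and N \<tau> :: nat and R B :: "'a set set"
    and m n :: nat +
  assumes n_less_m: "n < m"

lemma counterexample_swap:
  assumes "counterexample X Y E N \<tau> R B m n"
  shows "counterexample Y X E N \<tau> R B m n"
  using assms matching_free_coloring_swap unfolding counterexample_def counterexample_axioms_def
  by blast

context counterexample
begin

lemma swapped_counterexample: "counterexample Y X E N \<tau> R B m n"
  by (rule counterexample_swap) unfold_locales

lemma two_heavy_cross_cells_impossible:
  assumes x: "x1 \<in> X" "x2 \<in> X"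
    and distinct: "component R x1 \<noteq> component R x2" "component B x1 \<noteq> component B x2"
    and heavy: "\<tau> < card (Y \<inter> component R x1 \<inter> component B x2)"
      "\<tau> < card (Y \<inter> component R x2 \<inter> component B x1)"
  shows False
proof -
  let ?A = "\<lambda>u. X \<inter> component R u \<inter> component B u"
  have one_heavy_impossible: False
    if X_cells: "X \<subseteq> ?A u \<union> ?A v" and heavy_u: "\<tau> < card (?A u)"
      and distinct_uv: "component B u \<noteq> component B v" for u v
  proof -
    have "Y \<subseteq> component R u \<union> component B u"
      using matching_free_coloring.heavy_cell_attracts[OF swapped heavy_u] by blast
    moreover have "X - component R u \<subseteq> component B v"
      using X_cells by blast
    ultimately show False
      using split_configuration_impossible[OF distinct_uv] n_less_m by blast
  qed
  have "X \<subseteq> ?A x1 \<union> ?A x2"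
  proof
    fix x
    assume "x \<in> X"
    then have "x \<in> component R x1 \<or> x \<in> component B x2" "x \<in> component R x2 \<or> x \<in> component B x1"
      using heavy_cell_attracts[OF heavy(1)] heavy_cell_attracts[OF heavy(2)] by blast+
    then show "x \<in> ?A x1 \<union> ?A x2"
      using \<open>x \<in> X\<close> components_disjoint[OF distinct(1)] components_disjoint[OF distinct(2)]
      by blast
  qed
  have "N \<le> card (?A x1) + card (?A x2)"
  proof -
    have "card X \<le> card (?A x1 \<union> ?A x2)"
      using \<open>X \<subseteq> ?A x1 \<union> ?A x2\<close> finite_X by (intro card_mono) auto
    then show ?thesis
      using card_Un_le[of "?A x1" "?A x2"] card_X by linarith
  qed
  show False
  proof (cases "\<tau> < card (?A x1)")
    case True
    then show False
      using one_heavy_impossible \<open>X \<subseteq> ?A x1 \<union> ?A x2\<close> distinct(2) by blast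
  next
    case False
    then have "\<tau> < card (?A x2)"
      using \<open>N \<le> card (?A x1) + card (?A x2)\<close> four_tau_less by linarith
    moreover have "X \<subseteq> ?A x2 \<union> ?A x1"
      using \<open>X \<subseteq> ?A x1 \<union> ?A x2\<close> by blast
    ultimately show False
      using one_heavy_impossible distinct(2) by metis
  qed
qed

lemma heavy_cell_exists: "\<exists>a b. N \<le> card (Y \<inter> component R a \<inter> component B b) + 3 * \<tau>"
proof -
  obtain x1 x2 where x: "x1 \<in> X" "x2 \<in> X"
    and distinct: "component R x1 \<noteq> component R x2" "component B x1 \<noteq> component B x2"
    by (rule exists_cross_pair)
  have cells: "N \<le> card (Y \<inter> component R x1 \<inter> component B x2)
      + card (Y \<inter> component R x2 \<inter> component B x1) + 2 * \<tau>"
    using card_cross_cells[OF x distinct] .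
  show ?thesis
  proof (cases "\<tau> < card (Y \<inter> component R x1 \<inter> component B x2)")
    case True
    then have "card (Y \<inter> component R x2 \<inter> component B x1) \<le> \<tau>"
      using two_heavy_cross_cells_impossible[OF x distinct] by fastforce
    then show ?thesis
      using cells by (intro exI[of _ x1] exI[of _ x2]) linarith
  next
    case False
    then show ?thesis
      using cells by (intro exI[of _ x2] exI[of _ x1]) linarith
  qed
qed

lemma heavy_cells_cover_other_side:
  obtains a b a' b'
  where "\<tau> < card (Y \<inter> component R a \<inter> component B b)" "X \<subseteq> component R a \<union> component B b"
    and "\<tau> < card (X \<inter> component R a' \<inter> component B b')" "Y \<subseteq> component R a' \<union> component B b'"
proof -
  obtain a b where "N \<le> card (Y \<inter> component R a \<inter> component B b) + 3 * \<tau>"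
    using heavy_cell_exists by blast
  then have Y_cell: "\<tau> < card (Y \<inter> component R a \<inter> component B b)"
    using four_tau_less by linarith
  obtain a' b' where "N \<le> card (X \<inter> component R a' \<inter> component B b') + 3 * \<tau>"
    using counterexample.heavy_cell_exists[OF swapped_counterexample] by blast
  then have X_cell: "\<tau> < card (X \<inter> component R a' \<inter> component B b')"
    using four_tau_less by linarith
  show thesis
  proof (rule that[OF Y_cell _ X_cell])
    show "X \<subseteq> component R a \<union> component B b"
      using heavy_cell_attracts[OF Y_cell] by auto
    show "Y \<subseteq> component R a' \<union> component B b'"
      using matching_free_coloring.heavy_cell_attracts[OF swapped X_cell] by auto
  qed
qed

lemma no_counterexample: False
proof -
  obtain a b a' b' where Y_cell: "\<tau> < card (Y \<inter> component R a \<inter> component B b)"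
    and X_covered: "X \<subseteq> component R a \<union> component B b"
    and X_cell: "\<tau> < card (X \<inter> component R a' \<inter> component B b')"
    and Y_covered: "Y \<subseteq> component R a' \<union> component B b'"
    by (rule heavy_cells_cover_other_side)
  consider "component R a' = component R a" "component B b' = component B b"
    | "component R a' = component R a" "component B b' \<noteq> component B b"
    | "component R a' \<noteq> component R a" "component B b' = component B b"
    | "component R a' \<noteq> component R a" "component B b' \<noteq> component B b"
    by blast
  then show False
  proof cases
    case 1
    then show False
      using sides_covered_by_two_components_impossible X_covered Y_covered by simp
  next
    case 2
    then have "Y - component R a \<subseteq> component B b'"
      using Y_covered by blast
    moreover have "X - component R a \<subseteq> component B b"
      using X_covered by blast
    ultimately show False
      using split_configuration_impossible[OF 2(2)] n_less_m by blast
  next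
    case 3
    then have "Y - component B b \<subseteq> component R a'"
      using Y_covered by blast
    moreover have "X - component B b \<subseteq> component R a"
      using X_covered by blast
    moreover have "X \<inter> component B b \<inter> component R a' = X \<inter> component R a' \<inter> component B b'"
      "Y \<inter> component B b \<inter> component R a = Y \<inter> component R a \<inter> component B b"
      using 3(2) by blast+
    ultimately show False
      using matching_free_coloring.split_configuration_impossible[OF flipped 3(1), of b]
        n_less_m X_cell Y_cell by simp
  next
    case 4
    have "X \<inter> component R a' \<inter> component B b' \<noteq> {}"
      using X_cell by (intro notI) simp
    then obtain x where x: "x \<in> X" "x \<in> component R a'" "x \<in> component B b'"
      by blast
    then consider "x \<in> component R a" | "x \<in> component B b"
      using X_covered by blast
    then show False
    proof cases
      case 1
      then show False
        using component_eqI[OF x(2) 1] 4(1) by blast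
    next
      case 2
      then show False
        using component_eqI[OF x(3) 2] 4(2) by blast
    qed
  qed
qed

end

section \<open>The minimum degree condition\<close>

lemma bipartite_graph_swap: "bipartite_graph V1 V2 E \<Longrightarrow> bipartite_graph V2 V1 E"
  unfolding bipartite_graph_def by (metis inf_commute insert_commute)

lemma degree_bipartite:
  assumes "bipartite_graph V1 V2 E" and "x \<in> V1"
  shows "degree E x = card {y\<in>V2. {x, y} \<in> E}"
proof -
  have "{u. {u, x} \<in> E} = {y\<in>V2. {x, y} \<in> E}"
  proof (intro set_eqI iffI)
    fix u
    assume "u \<in> {u. {u, x} \<in> E}"
    then obtain a b where ab: "a \<in> V1" "b \<in> V2" "{u, x} = {a, b}" "{u, x} \<in> E"
      using assms(1) unfolding bipartite_graph_def by blast
    then have "u = b"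
      using assms unfolding bipartite_graph_def by (auto simp: doubleton_eq_iff)
    then show "u \<in> {y\<in>V2. {x, y} \<in> E}"
      using ab by (simp add: insert_commute)
  qed (simp add: insert_commute)
  then show ?thesis
    by (simp add: degree_def)
qed

lemma dense_bipartite_if_min_degree:
  assumes bipartite: "bipartite_graph V1 V2 E" and "finite V1" "finite V2"
    and "card V1 = N" "card V2 = N" and "0 < N"
    and min_degree: "\<forall>v\<in>V1 \<union> V2. 3 * N < 4 * degree E v"
  shows "dense_bipartite V1 V2 E N ((N - 1) div 4)"
proof -
  have non_neighbours: "card {y\<in>V2. {x, y} \<notin> E} \<le> (N - 1) div 4"
    if "bipartite_graph V1 V2 E" "finite V2" "card V2 = N" "\<forall>v\<in>V1. 3 * N < 4 * degree E v"
      and "x \<in> V1" for V1 V2 x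
  proof -
    have "card {y\<in>V2. {x, y} \<notin> E} + degree E x = N"
      using degree_bipartite[OF that(1,5)] card_Int_Diff[OF that(2), of "{y. {x, y} \<in> E}"] that(3)
      by (simp add: Collect_conj_eq Diff_eq Int_commute Collect_neg_eq)
    then show ?thesis
      using that(4,5) by fastforce
  qed
  have "card {x\<in>V1. {x, y} \<notin> E} \<le> (N - 1) div 4" if "y \<in> V2" for y
  proof -
    have "{x\<in>V1. {x, y} \<notin> E} = {x\<in>V1. {y, x} \<notin> E}"
      by (simp add: insert_commute)
    then show ?thesis
      using non_neighbours[OF bipartite_graph_swap[OF bipartite] assms(2,4)] min_degree that
      by simp
  qed
  moreover have "card {y\<in>V2. {x, y} \<notin> E} \<le> (N - 1) div 4" if "x \<in> V1" for x
    using non_neighbours[OF bipartite assms(3,5)] min_degree that by simp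
  ultimately show ?thesis
    using assms bipartite unfolding bipartite_graph_def
    by unfold_locales auto
qed

theorem theorem1p5:
  fixes V1 V2 :: "'a set" and E R B :: "'a set set" and m n :: nat
  assumes "0 < n" and "n < m"
    and "finite V1" and "finite V2"
    and "card V1 = m + n - 1" and "card V2 = m + n - 1"
    and "bipartite_graph V1 V2 E"
    and "\<forall>v\<in>V1 \<union> V2. 4 * degree E v > 3 * (m + n - 1)"
    and "R \<union> B = E" and "R \<inter> B = {}"
  shows "has_connected_k_matching R m \<or> has_connected_k_matching B n"
proof (rule ccontr)
  assume no_matchings: "\<not> ?thesis"
  let ?N = "m + n - 1"
  have "dense_bipartite V1 V2 E ?N ((?N - 1) div 4)"
    using assms(1-8) by (intro dense_bipartite_if_min_degree) auto
  then have "counterexample V1 V2 E ?N ((?N - 1) div 4) R B m n"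
    using assms(1,2,9) no_matchings
    unfolding counterexample_def counterexample_axioms_def matching_free_coloring_def
      matching_free_coloring_axioms_def
    by auto
  then show False
    by (rule counterexample.no_counterexample)
qed

end
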